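(* For each $c\in\mathbb C$, each of the sets $S=\{J^{0,0},J^{1,0},J^{+,0},J^{-,0},J^{0,1}\}$ and $T=\{J^{0,0},J^{1,0},J^{+,0},J^{-,0},J^{+,1},J^{-,1}\}$ generates $\mathcal M_c(\widehat{\mathcal{SD}})$ as a vertex algebra (i.e. every element is a linear combination of iterated products $a_1\circ_{n_1}(a_2\circ_{n_2}(\cdots))$, $n_i\in\mathbb Z$, of elements of the set).
   Context: Let $D=t\frac{d}{dt}$. The Lie superalgebra $\mathcal{SD}$ of regular differential operators on the super circle is spanned by the elements $t^rF(D)$, $r\in\mathbb Z$, where $F(D)=\begin{pmatrix} f_0(D)&f_+(D)\\ f_-(D)&f_1(D)\end{pmatrix}$ with $f_a\in\mathbb C[x]$; diagonal entries are even and off-diagonal entries are odd. Its central extension $\widehat{\mathcal{SD}}=\mathcal{SD}\oplus\mathbb C C$ ($C$ central) has bracket $[t^rF(D),t^sG(D)]=t^{r+s}\big(F(D+s)G(D)-(-1)^{|F||G|}F(D)G(D+r)\big)+\Psi(t^rF(D),t^sG(D))\,C$, where $\Psi(t^rF(D),t^sG(D))=\sum_{j=-r}^{-1}\mathrm{Str}(F(j)G(j+r))$ if $r=-s\ge 0$ (extended by super-skew-symmetry) and $\Psi=0$ if $r+s\ne0$; here $\mathrm{Str}\begin{pmatrix}\alpha^0&\alpha^+\\ \alpha^-&\alpha^1\end{pmatrix}=\alpha^0-\alpha^1$. Let $M_0=E_{11}$, $M_1=E_{22}$, $M_+=E_{12}$, $M_-=E_{21}$ (matrix units), and for $a\in\{0,1,+,-\}$,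 $k\in\mathbb Z_{\ge0}$, $n\in\mathbb Z$ put $J^{a,k}_n=-t^{k+n}\partial_t^k M_a$. Let $\widehat{\mathcal{SP}}$ be the span of $C$ and of all $J^{a,k}_n$ with $k+n\ge0$; for $c\in\mathbb C$ let $\mathbb C_c$ be the one-dimensional $\widehat{\mathcal{SP}}$-module on which $C$ acts by $c$ and every $J^{a,k}_n$ acts by $0$. The vacuum module of central charge $c$ is $\mathcal M_c(\widehat{\mathcal{SD}})=U(\widehat{\mathcal{SD}})\otimes_{U(\widehat{\mathcal{SP}})}\mathbb C_c$; it is a vertex superalgebra freely generated by the fields $J^{a,k}(z)=\sum_{n\in\mathbb Z}J^{a,k}_nz^{-n-k-1}$, $k\ge0$, where $J^{0,k},J^{1,k}$ are even of conformal weight $k+1$, $J^{+,k}$ is odd of weight $k+\tfrac12$ and $J^{-,k}$ is odd of weight $k+\tfrac32$. *)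

theory Defs
  imports Complex_Main "HOL-Computational_Algebra.Polynomial" "HOL-Library.Poly_Mapping"
begin

text \<open>Matrix units: M0 = E11, M1 = E22, Mp = E12, Mm = E21.\<close>
datatype lbl = L0 | L1 | Lp | Lm

fun lbl_row :: "lbl \<Rightarrow> nat" where
  "lbl_row L0 = 1" | "lbl_row L1 = 2" | "lbl_row Lp = 1" | "lbl_row Lm = 2"
fun lbl_col :: "lbl \<Rightarrow> nat" where
  "lbl_col L0 = 1" | "lbl_col L1 = 2" | "lbl_col Lp = 2" | "lbl_col Lm = 1"

definition lbl_of :: "nat \<Rightarrow> nat \<Rightarrow> lbl" where
  "lbl_of i j = (if i = 1 then (if j = 1 then L0 else Lp) else (if j = 1 then Lm else L1))"

definition lbl_mult :: "lbl \<Rightarrow> lbl \<Rightarrow> lbl option" where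
  "lbl_mult a b = (if lbl_col a = lbl_row b then Some (lbl_of (lbl_row a) (lbl_col b)) else None)"

definition lbl_odd :: "lbl \<Rightarrow> bool" where
  "lbl_odd a = (a = Lp \<or> a = Lm)"

definition str_lbl :: "lbl \<Rightarrow> complex" where
  "str_lbl a = (if a = L0 then 1 else if a = L1 then -1 else 0)"

text \<open>An element of the central extension: finitely supported
  sum over (r,a) of t^r f_{r,a}(D) M_a, plus a multiple of C.\<close>
type_synonym sdel = "((int \<times> lbl) \<Rightarrow>\<^sub>0 complex poly) \<times> complex"

definition sd_add :: "sdel \<Rightarrow> sdel \<Rightarrow> sdel" where
  "sd_add x y = (fst x + fst y, snd x + snd y)"

definition sd_scale :: "complex \<Rightarrow> sdel \<Rightarrow> sdel" where
  "sd_scale k x = (Poly_Mapping.map (smult k) (fst x), k * snd x)"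

datatype mono = Mono int lbl "complex poly" | Cen

fun mono_el :: "mono \<Rightarrow> sdel" where
  "mono_el (Mono r a f) = (Poly_Mapping.single (r, a) f, 0)"
| "mono_el Cen = (0, 1)"

fun mono_odd :: "mono \<Rightarrow> bool" where
  "mono_odd (Mono r a f) = lbl_odd a"
| "mono_odd Cen = False"

definition sgn_par :: "mono \<Rightarrow> mono \<Rightarrow> complex" where
  "sgn_par x y = (if mono_odd x \<and> mono_odd y then -1 else 1)"

definition shiftD :: "complex poly \<Rightarrow> int \<Rightarrow> complex poly" where
  "shiftD f s = pcompose f [:of_int s, 1:]"

definition term_el :: "int \<Rightarrow> lbl option \<Rightarrow> complex poly \<Rightarrow> (int \<times> lbl) \<Rightarrow>\<^sub>0 complex poly" where
  "term_el r c h = (case c of None \<Rightarrow> 0 | Some c' \<Rightarrow> Poly_Mapping.single (r, c') h)"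

text \<open>The cocycle Psi on homogeneous elements, r = -s \<ge> 0 case, with
  Str(F(j) G(j+r)) = f(j) g(j+r) Str(M_a M_b).\<close>
definition psi0 :: "int \<Rightarrow> lbl \<Rightarrow> complex poly \<Rightarrow> lbl \<Rightarrow> complex poly \<Rightarrow> complex" where
  "psi0 r a f b g =
     (\<Sum>j\<in>{-r..-1}. poly f (of_int j) * poly g (of_int (j + r)) *
        (case lbl_mult a b of None \<Rightarrow> 0 | Some c \<Rightarrow> str_lbl c))"

definition psi :: "int \<Rightarrow> lbl \<Rightarrow> complex poly \<Rightarrow> int \<Rightarrow> lbl \<Rightarrow> complex poly \<Rightarrow> complex" where
  "psi r a f s b g =
     (if r + s \<noteq> 0 then 0
      else if r \<ge> 0 then psi0 r a f b g
      else - (if lbl_odd a \<and> lbl_odd b then -1 else 1) * psi0 s b g a f)"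

text \<open>The super bracket
  [t^r F(D), t^s G(D)] = t^{r+s}(F(D+s)G(D) - (-1)^{|F||G|} G(D+r)F(D)) + Psi C,
  and C central.\<close>
fun sd_bracket :: "mono \<Rightarrow> mono \<Rightarrow> sdel" where
  "sd_bracket (Mono r a f) (Mono s b g) =
     (term_el (r + s) (lbl_mult a b) (shiftD f s * g)
        - term_el (r + s) (lbl_mult b a) (smult (if lbl_odd a \<and> lbl_odd b then -1 else 1) (shiftD g r * f)),
      psi r a f s b g)"
| "sd_bracket Cen y = (0, 0)"
| "sd_bracket x Cen = (0, 0)"

text \<open>Falling factorial D(D-1)...(D-k+1) = t^k d^k/dt^k.\<close>
definition ffD :: "nat \<Rightarrow> complex poly" where
  "ffD k = (\<Prod>i<k. [:- of_nat i, 1:])"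

text \<open>J^{a,k}_n = - t^{k+n} d_t^k M_a = - t^n D(D-1)...(D-k+1) M_a.\<close>
definition Jmode :: "lbl \<Rightarrow> nat \<Rightarrow> int \<Rightarrow> mono" where
  "Jmode a k n = Mono n a (- ffD k)"

text \<open>Tensor algebra: formal linear combinations of words of elements
  (a word x_1 ... x_m stands for x_1 \<otimes> ... \<otimes> x_m, acting on the vacuum,
  x_m first).\<close>
type_synonym tel = "sdel list \<Rightarrow> complex"

definition wd :: "sdel list \<Rightarrow> tel" where
  "wd w = (\<lambda>u. if u = w then 1 else 0)"

inductive_set cspan :: "tel set \<Rightarrow> tel set" for A where
  cspan_zero: "(\<lambda>_. 0) \<in> cspan A"
| cspan_base: "x \<in> A \<Longrightarrow> x \<in> cspan A"
| cspan_add: "x \<in> cspan A \<Longrightarrow> y \<in> cspan A \<Longrightarrow> (\<lambda>u. x u + y u) \<in> cspan A"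
| cspan_scale: "x \<in> cspan A \<Longrightarrow> (\<lambda>u. k * x u) \<in> cspan A"

text \<open>Generators of the subspace L_c: multilinearity (defining the tensor algebra),
  the two-sided ideal of the super commutator relations (defining U),
  and the left ideal generated by SP^ acting via the character C \<mapsto> c, J \<mapsto> 0.\<close>
inductive_set vac_rel :: "complex \<Rightarrow> tel set" for c where
  rel_add: "(\<lambda>u. wd (w1 @ [sd_add x y] @ w2) u - wd (w1 @ [x] @ w2) u - wd (w1 @ [y] @ w2) u) \<in> vac_rel c"
| rel_scale: "(\<lambda>u. wd (w1 @ [sd_scale k x] @ w2) u - k * wd (w1 @ [x] @ w2) u) \<in> vac_rel c"
| rel_comm: "(\<lambda>u. wd (w1 @ [mono_el x, mono_el y] @ w2) u
               - sgn_par x y * wd (w1 @ [mono_el y, mono_el x] @ w2) u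
               - wd (w1 @ [sd_bracket x y] @ w2) u) \<in> vac_rel c"
| rel_ann: "int k + n \<ge> 0 \<Longrightarrow> wd (w @ [mono_el (Jmode a k n)]) \<in> vac_rel c"
| rel_cent: "(\<lambda>u. wd (w @ [mono_el Cen]) u - c * wd w u) \<in> vac_rel c"

text \<open>The kernel L_c of T(SD^) \<rightarrow> M_c; M_c = cspan (range wd) / vac_ideal c,
  with vacuum vector the class of the empty word.\<close>
definition vac_ideal :: "complex \<Rightarrow> tel set" where
  "vac_ideal c = cspan (vac_rel c)"

text \<open>For a generator J^{a,k} (state J^{a,k}_{-k-1}|0>), with field
  J^{a,k}(z) = \<Sum>_n J^{a,k}_n z^{-n-k-1} = \<Sum>_m (J^{a,k})_{(m)} z^{-m-1},
  the m-th product J^{a,k} \<circ>_m v is J^{a,k}_{m-k} v.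
  Iterated products of generators from G (starting from the vacuum; note
  J^{a,k} = J^{a,k} \<circ>_{-1} |0>), represented by words.\<close>
inductive_set iter_prods :: "(lbl \<times> nat) set \<Rightarrow> sdel list set" for G where
  ip_vac: "[] \<in> iter_prods G"
| ip_step: "(a, k) \<in> G \<Longrightarrow> w \<in> iter_prods G \<Longrightarrow>
     mono_el (Jmode a k (m - int k)) # w \<in> iter_prods G"

definition generates_vac :: "complex \<Rightarrow> (lbl \<times> nat) set \<Rightarrow> bool" where
  "generates_vac c G \<longleftrightarrow>
     (\<forall>v \<in> cspan (range wd). v \<in> cspan (wd ` iter_prods G \<union> vac_ideal c))"

end

theory Submission
  imports Defs "HOL-Library.Function_Algebras"
begin

text \<open>Call x stable if prefixing x maps every iterated product of G into the span of the
  iterated products and the relation space L_c. As the empty word is an iterated product,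
  G generates M_c once every x is stable. The commutator relations make the stable elements a
  subspace closed under the super bracket; it contains C, which acts by c, and every mode of a
  generator, since prefixing it to an iterated product gives another one. So it suffices to
  generate SD from the modes t^n M_a together with t^n D M_0 (for S), resp. t^n D M_+ and
  t^n D M_- (for T). Bracketing with t^n D M_0 multiplies the odd operators by D. The brackets
  [t^n q M_+, M_-] and [t M_+, t^(n-1) q M_-] are t^n (q M_0 + q M_1) and
  t^n (q M_0 + q(D+1) M_1), and their difference is an arbitrary t^n h M_1 because the forward
  difference q(D+1) - q(D) is onto. For T, t^n D M_0 is recovered from [t^m D M_+, D M_-].\<close>

section \<open>Linear spans and congruence modulo a span\<close>

lemma cspan_0: "0 \<in> cspan A"
  using cspan_zero by (simp add: zero_fun_def)

lemma cspan_plus: "x \<in> cspan A \<Longrightarrow> y \<in> cspan A \<Longrightarrow> x + y \<in> cspan A"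
  using cspan_add by (simp add: plus_fun_def)

lemma cspan_const_mult: "x \<in> cspan A \<Longrightarrow> (\<lambda>_. k) * x \<in> cspan A"
  using cspan_scale by (simp add: times_fun_def)

lemma cspan_minus:
  assumes "x \<in> cspan A" "y \<in> cspan A" shows "x - y \<in> cspan A"
proof -
  have "x - y = x + (\<lambda>_. -1) * y" by (simp add: fun_eq_iff)
  then show ?thesis using assms by (metis cspan_plus cspan_const_mult)
qed

lemma cspan_subset: assumes "A \<subseteq> cspan B" "x \<in> cspan A" shows "x \<in> cspan B"
  using assms(2) by (induction x rule: cspan.induct) (use assms(1) in \<open>auto intro: cspan.intros\<close>)

definition cong_mod :: "tel set \<Rightarrow> tel \<Rightarrow> tel \<Rightarrow> bool"
  where "cong_mod S v w \<longleftrightarrow> v - w \<in> S"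

abbreviation cong_mod_syntax :: "tel \<Rightarrow> tel \<Rightarrow> tel set \<Rightarrow> bool" ("(_ \<cong> _ '(mod _'))" [51, 51, 0] 50)
  where "v \<cong> w (mod S) \<equiv> cong_mod S v w"

lemma cong_mod_refl [intro]: "v \<cong> v (mod cspan A)"
  by (simp add: cong_mod_def cspan_0)

lemma cong_mod_sym: "v \<cong> w (mod cspan A) \<Longrightarrow> w \<cong> v (mod cspan A)"
  unfolding cong_mod_def using cspan_minus[OF cspan_0, of "v - w" A] by simp

lemma cong_mod_trans [trans]:
  "u \<cong> v (mod cspan A) \<Longrightarrow> v \<cong> w (mod cspan A) \<Longrightarrow> u \<cong> w (mod cspan A)"
  unfolding cong_mod_def using cspan_plus[of "u - v" A "v - w"] by simp

lemma eq_cong_mod_trans [trans]: "u = v \<Longrightarrow> v \<cong> w (mod S) \<Longrightarrow> u \<cong> w (mod S)"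
  by simp

lemma cong_mod_eq_trans [trans]: "u \<cong> v (mod S) \<Longrightarrow> v = w \<Longrightarrow> u \<cong> w (mod S)"
  by simp

lemma cong_mod_plus:
  "v \<cong> v' (mod cspan A) \<Longrightarrow> w \<cong> w' (mod cspan A) \<Longrightarrow> v + w \<cong> v' + w' (mod cspan A)"
  unfolding cong_mod_def using cspan_plus[of "v - v'" A "w - w'"] by (simp add: algebra_simps)

lemma cong_mod_minus:
  "v \<cong> v' (mod cspan A) \<Longrightarrow> w \<cong> w' (mod cspan A) \<Longrightarrow> v - w \<cong> v' - w' (mod cspan A)"
  unfolding cong_mod_def using cspan_minus[of "v - v'" A "w - w'"] by (simp add: algebra_simps)

lemma cong_mod_const_mult:
  "v \<cong> w (mod cspan A) \<Longrightarrow> (\<lambda>_. k) * v \<cong> (\<lambda>_. k) * w (mod cspan A)"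
  unfolding cong_mod_def using cspan_const_mult[of "v - w" A k] by (simp add: algebra_simps)

lemma cong_mod_cspan: "v \<cong> w (mod cspan A) \<Longrightarrow> w \<in> cspan A \<Longrightarrow> v \<in> cspan A"
  unfolding cong_mod_def using cspan_plus[of "v - w" A w] by simp

section \<open>Elements stabilising the span of iterated products\<close>

abbreviation gen_span :: "complex \<Rightarrow> (lbl \<times> nat) set \<Rightarrow> tel set" where
  "gen_span c G \<equiv> cspan (wd ` iter_prods G \<union> vac_ideal c)"

lemma vac_rel_in_gen_span: "v \<in> vac_rel c \<Longrightarrow> v \<in> gen_span c G"
  by (simp add: vac_ideal_def cspan_base)

lemma iter_prod_in_gen_span: "u \<in> iter_prods G \<Longrightarrow> wd u \<in> gen_span c G"
  by (simp add: cspan_base)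

lemma wd_add_cong:
  "wd (p @ sd_add x y # q) \<cong> wd (p @ x # q) + wd (p @ y # q) (mod gen_span c G)"
  using vac_rel_in_gen_span[OF rel_add[of p x y q c]]
  by (simp add: cong_mod_def fun_diff_def plus_fun_def diff_diff_eq)

lemma wd_scale_cong:
  "wd (p @ sd_scale k x # q) \<cong> (\<lambda>_. k) * wd (p @ x # q) (mod gen_span c G)"
  using vac_rel_in_gen_span[OF rel_scale[of p k x q c]]
  by (simp add: cong_mod_def fun_diff_def times_fun_def)

lemma wd_bracket_cong:
  "wd (p @ sd_bracket x y # q) \<cong> wd (p @ mono_el x # mono_el y # q)
     - (\<lambda>_. sgn_par x y) * wd (p @ mono_el y # mono_el x # q) (mod gen_span c G)"
proof -
  have "- (\<lambda>u. wd (p @ [mono_el x, mono_el y] @ q) u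
           - sgn_par x y * wd (p @ [mono_el y, mono_el x] @ q) u
           - wd (p @ [sd_bracket x y] @ q) u) \<in> gen_span c G"
    using cspan_minus[OF cspan_0 vac_rel_in_gen_span[OF rel_comm]] by simp
  then show ?thesis
    by (simp add: cong_mod_def fun_Compl_def fun_diff_def times_fun_def algebra_simps)
qed

lemma map_smult_zero [simp]: "Poly_Mapping.map (smult k) 0 = 0"
  by (simp add: map_eq_zero_iff)

lemma sd_scale_0 [simp]: "sd_scale 0 x = (0, 0)"
  by (simp add: sd_scale_def map_eq_zero_iff)

lemma wd_zero_cong: "wd (p @ (0, 0) # q) \<cong> 0 (mod gen_span c G)"
  using wd_scale_cong[where p=p and k=0 and q=q] by (simp add: zero_fun_def times_fun_def)

lemma wd_central_cong:
  "u \<in> iter_prods G \<Longrightarrow> wd (p @ mono_el Cen # u) \<cong> (\<lambda>_. c) * wd (p @ u) (mod gen_span c G)"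
proof (induction u arbitrary: p rule: iter_prods.induct)
  case ip_vac
  show ?case
    using vac_rel_in_gen_span[OF rel_cent[of p c]]
    by (simp add: cong_mod_def fun_diff_def times_fun_def)
next
  case (ip_step a k w m)
  let ?J = "Jmode a k (m - int k)"
  have "wd (p @ mono_el Cen # mono_el ?J # w)
      = (wd (p @ mono_el Cen # mono_el ?J # w)
          - (\<lambda>_. sgn_par Cen ?J) * wd (p @ mono_el ?J # mono_el Cen # w))
        + wd ((p @ [mono_el ?J]) @ mono_el Cen # w)"
    by (simp add: fun_eq_iff sgn_par_def)
  also have "\<dots> \<cong> wd (p @ sd_bracket Cen ?J # w) + (\<lambda>_. c) * wd ((p @ [mono_el ?J]) @ w)
                 (mod gen_span c G)"
    by (rule cong_mod_plus[OF cong_mod_sym[OF wd_bracket_cong] ip_step.IH])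
  also have "\<dots> \<cong> 0 + (\<lambda>_. c) * wd (p @ mono_el ?J # w) (mod gen_span c G)"
    using wd_zero_cong[where p=p and q=w] by (intro cong_mod_plus) (auto simp: Jmode_def)
  also have "\<dots> = (\<lambda>_. c) * wd (p @ mono_el ?J # w)"
    by (rule add_0_left)
  finally show ?case .
qed

definition lmult :: "sdel \<Rightarrow> tel \<Rightarrow> tel" where
  "lmult x v = (\<lambda>u. case u of [] \<Rightarrow> 0 | y # u' \<Rightarrow> if y = x then v u' else 0)"

lemma lmult_wd: "lmult x (wd w) = wd (x # w)"
  by (auto simp: lmult_def wd_def fun_eq_iff split: list.split)

lemma lmult_lambda_diff: "lmult x (\<lambda>u. f u - g u) = (\<lambda>u. lmult x f u - lmult x g u)"
  by (auto simp: lmult_def fun_eq_iff split: list.split)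

lemma lmult_lambda_mult: "lmult x (\<lambda>u. k * f u) = (\<lambda>u. k * lmult x f u)"
  by (auto simp: lmult_def fun_eq_iff split: list.split)

lemma lmult_vac_rel: "v \<in> vac_rel c \<Longrightarrow> lmult x v \<in> vac_rel c"
proof (induction v rule: vac_rel.induct)
  case (rel_add p y z q)
  show ?case using vac_rel.rel_add[of "x # p" y z q c]
    by (simp only: lmult_lambda_diff lmult_wd append_Cons)
next
  case (rel_scale p k y q)
  show ?case using vac_rel.rel_scale[of "x # p" k y q c]
    by (simp only: lmult_lambda_diff lmult_lambda_mult lmult_wd append_Cons)
next
  case (rel_comm p y z q)
  show ?case using vac_rel.rel_comm[of "x # p" y z q c]
    by (simp only: lmult_lambda_diff lmult_lambda_mult lmult_wd append_Cons)
next
  case (rel_ann k n w a)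
  show ?case using vac_rel.rel_ann[of k n "x # w" a c] rel_ann
    by (simp only: lmult_wd append_Cons)
next
  case (rel_cent w)
  show ?case using vac_rel.rel_cent[of "x # w" c]
    by (simp only: lmult_lambda_diff lmult_lambda_mult lmult_wd append_Cons)
qed

lemma lmult_cspan:
  assumes "\<And>v. v \<in> A \<Longrightarrow> lmult x v \<in> cspan B" and "v \<in> cspan A"
  shows "lmult x v \<in> cspan B"
  using assms(2)
proof (induction v rule: cspan.induct)
  case cspan_zero
  have "lmult x (\<lambda>_. 0) = (\<lambda>_. 0)"
    by (auto simp: lmult_def fun_eq_iff split: list.split)
  then show ?case by (simp add: cspan.cspan_zero)
next
  case (cspan_base v)
  then show ?case by (rule assms(1))
next
  case (cspan_add v w)
  have "lmult x (\<lambda>u. v u + w u) = (\<lambda>u. lmult x v u + lmult x w u)"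
    by (auto simp: lmult_def fun_eq_iff split: list.split)
  then show ?case using cspan_add by (simp add: cspan.cspan_add)
next
  case (cspan_scale v k)
  then show ?case by (simp add: lmult_lambda_mult cspan.cspan_scale)
qed

lemma lmult_vac_ideal: "v \<in> vac_ideal c \<Longrightarrow> lmult x v \<in> vac_ideal c"
  unfolding vac_ideal_def by (rule lmult_cspan) (auto intro: cspan_base lmult_vac_rel)

definition span_stable :: "complex \<Rightarrow> (lbl \<times> nat) set \<Rightarrow> sdel \<Rightarrow> bool" where
  "span_stable c G x \<longleftrightarrow> (\<forall>u \<in> iter_prods G. wd (x # u) \<in> gen_span c G)"

lemma lmult_gen_span: "span_stable c G x \<Longrightarrow> v \<in> gen_span c G \<Longrightarrow> lmult x v \<in> gen_span c G"
  by (rule lmult_cspan)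
     (auto simp: lmult_wd span_stable_def intro: cspan_base lmult_vac_ideal)

lemma span_stable_Cons_Cons:
  "span_stable c G x \<Longrightarrow> span_stable c G y \<Longrightarrow> u \<in> iter_prods G \<Longrightarrow> wd (x # y # u) \<in> gen_span c G"
  using lmult_gen_span[of c G x "wd (y # u)"] by (simp add: lmult_wd span_stable_def)

lemma generates_vac_if_all_stable:
  assumes "\<And>x. span_stable c G x" shows "generates_vac c G"
proof -
  have words: "wd w \<in> gen_span c G" for w
  proof (induction w)
    case Nil
    then show ?case by (simp add: iter_prod_in_gen_span iter_prods.ip_vac)
  next
    case (Cons x w)
    show ?case using lmult_gen_span[OF assms Cons.IH] by (simp only: lmult_wd)
  qed
  show ?thesis unfolding generates_vac_def
  proof
    fix v assume "v \<in> cspan (range wd)"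
    then show "v \<in> gen_span c G"
      by (rule cspan_subset[rotated]) (use words in blast)
  qed
qed

lemma span_stable_add:
  assumes "span_stable c G x" "span_stable c G y" shows "span_stable c G (sd_add x y)"
  unfolding span_stable_def
proof
  fix u assume "u \<in> iter_prods G"
  then have "wd (x # u) + wd (y # u) \<in> gen_span c G"
    using assms by (simp add: span_stable_def cspan_plus)
  then show "wd (sd_add x y # u) \<in> gen_span c G"
    by (rule cong_mod_cspan[OF wd_add_cong[where p="[]", unfolded append_Nil]])
qed

lemma span_stable_scale:
  assumes "span_stable c G x" shows "span_stable c G (sd_scale k x)"
  unfolding span_stable_def
proof
  fix u assume "u \<in> iter_prods G"
  then have "(\<lambda>_. k) * wd (x # u) \<in> gen_span c G"
    using assms by (simp add: span_stable_def cspan_const_mult)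
  then show "wd (sd_scale k x # u) \<in> gen_span c G"
    by (rule cong_mod_cspan[OF wd_scale_cong[where p="[]", unfolded append_Nil]])
qed

lemma span_stable_Cen: "span_stable c G (mono_el Cen)"
  unfolding span_stable_def
proof
  fix u assume u: "u \<in> iter_prods G"
  then have "(\<lambda>_. c) * wd u \<in> gen_span c G"
    by (simp add: iter_prod_in_gen_span cspan_const_mult)
  then show "wd (mono_el Cen # u) \<in> gen_span c G"
    by (rule cong_mod_cspan[OF wd_central_cong[OF u, where p="[]", unfolded append_Nil]])
qed

lemma span_stable_bracket:
  assumes x: "span_stable c G (mono_el x)" and y: "span_stable c G (mono_el y)"
  shows "span_stable c G (sd_bracket x y)"
  unfolding span_stable_def
proof
  fix u assume u: "u \<in> iter_prods G"
  have "wd (mono_el x # mono_el y # u) - (\<lambda>_. sgn_par x y) * wd (mono_el y # mono_el x # u)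
      \<in> gen_span c G"
    using span_stable_Cons_Cons[OF x y u] span_stable_Cons_Cons[OF y x u]
    by (intro cspan_minus cspan_const_mult)
  then show "wd (sd_bracket x y # u) \<in> gen_span c G"
    by (rule cong_mod_cspan[OF wd_bracket_cong[where p="[]", unfolded append_Nil]])
qed

text \<open>Stability of y1 + y2 does not give stability of y1 and y2 separately, so brackets
  with such a sum need their own rule.\<close>

lemma span_stable_bracket_add:
  assumes x: "span_stable c G (mono_el x)" and y: "span_stable c G (sd_add (mono_el y1) (mono_el y2))"
    and sgn: "sgn_par x y1 = sgn_par x y2"
  shows "span_stable c G (sd_add (sd_bracket x y1) (sd_bracket x y2))"
  unfolding span_stable_def
proof
  fix u assume u: "u \<in> iter_prods G"
  let ?S = "gen_span c G" and ?s = "\<lambda>_. sgn_par x y1"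
    and ?x = "mono_el x" and ?y1 = "mono_el y1" and ?y2 = "mono_el y2"
  have "wd (sd_add (sd_bracket x y1) (sd_bracket x y2) # u)
      \<cong> wd (sd_bracket x y1 # u) + wd (sd_bracket x y2 # u) (mod ?S)"
    using wd_add_cong[where p="[]"] by simp
  also have "\<dots> \<cong> (wd (?x # ?y1 # u) - ?s * wd (?y1 # ?x # u))
                 + (wd (?x # ?y2 # u) - ?s * wd (?y2 # ?x # u)) (mod ?S)"
  proof (rule cong_mod_plus)
    show "wd (sd_bracket x y1 # u) \<cong> wd (?x # ?y1 # u) - ?s * wd (?y1 # ?x # u) (mod ?S)"
      using wd_bracket_cong[where p="[]"] by simp
    show "wd (sd_bracket x y2 # u) \<cong> wd (?x # ?y2 # u) - ?s * wd (?y2 # ?x # u) (mod ?S)"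
      using wd_bracket_cong[where p="[]" and x=x and y=y2] sgn by simp
  qed
  also have "\<dots> = (wd (?x # ?y1 # u) + wd (?x # ?y2 # u))
                 - ?s * (wd (?y1 # ?x # u) + wd (?y2 # ?x # u))"
    by (simp add: algebra_simps)
  also have "\<dots> \<cong> wd (?x # sd_add ?y1 ?y2 # u) - ?s * wd (sd_add ?y1 ?y2 # ?x # u) (mod ?S)"
    by (intro cong_mod_minus cong_mod_const_mult
        cong_mod_sym[OF wd_add_cong[where p="[?x]", unfolded append_Cons append_Nil]]
        cong_mod_sym[OF wd_add_cong[where p="[]", unfolded append_Nil]])
  finally have "wd (sd_add (sd_bracket x y1) (sd_bracket x y2) # u)
      \<cong> wd (?x # sd_add ?y1 ?y2 # u) - ?s * wd (sd_add ?y1 ?y2 # ?x # u) (mod ?S)" .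
  moreover have "wd (?x # sd_add ?y1 ?y2 # u) - ?s * wd (sd_add ?y1 ?y2 # ?x # u) \<in> ?S"
    using span_stable_Cons_Cons[OF x y u] span_stable_Cons_Cons[OF y x u]
    by (intro cspan_minus cspan_const_mult)
  ultimately show "wd (sd_add (sd_bracket x y1) (sd_bracket x y2) # u) \<in> ?S"
    by (rule cong_mod_cspan)
qed

definition span_stable_op :: "complex \<Rightarrow> (lbl \<times> nat) set \<Rightarrow> ((int \<times> lbl) \<Rightarrow>\<^sub>0 complex poly) \<Rightarrow> bool"
  where "span_stable_op c G p \<longleftrightarrow> span_stable c G (p, 0)"

abbreviation stable_term :: "complex \<Rightarrow> (lbl \<times> nat) set \<Rightarrow> int \<Rightarrow> lbl \<Rightarrow> complex poly \<Rightarrow> bool"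
  where "stable_term c G r a f \<equiv> span_stable_op c G (Poly_Mapping.single (r, a) f)"

lemma span_stable_iff_op: "span_stable c G (p, z) \<longleftrightarrow> span_stable_op c G p"
proof
  assume "span_stable c G (p, z)"
  then have "span_stable c G (sd_add (p, z) (sd_scale (- z) (mono_el Cen)))"
    by (intro span_stable_add span_stable_scale span_stable_Cen)
  then show "span_stable_op c G p"
    by (simp add: span_stable_op_def sd_add_def sd_scale_def)
next
  assume "span_stable_op c G p"
  then have "span_stable c G (sd_add (p, 0) (sd_scale z (mono_el Cen)))"
    unfolding span_stable_op_def by (intro span_stable_add span_stable_scale span_stable_Cen)
  then show "span_stable c G (p, z)"
    by (simp add: sd_add_def sd_scale_def)
qed

lemma span_stable_op_add:
  "span_stable_op c G p \<Longrightarrow> span_stable_op c G q \<Longrightarrow> span_stable_op c G (p + q)"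
  unfolding span_stable_op_def using span_stable_add[of c G "(p, 0)" "(q, 0)"]
  by (simp add: sd_add_def)

lemma span_stable_op_smult:
  "span_stable_op c G p \<Longrightarrow> span_stable_op c G (Poly_Mapping.map (smult k) p)"
  unfolding span_stable_op_def using span_stable_scale[of c G "(p, 0)" k]
  by (simp add: sd_scale_def)

lemma span_stable_op_uminus:
  assumes "span_stable_op c G p" shows "span_stable_op c G (- p)"
proof -
  have "Poly_Mapping.map (smult (-1)) p = - p"
    by transfer (simp add: fun_eq_iff when_def)
  then show ?thesis using span_stable_op_smult[OF assms, of "-1"] by simp
qed

lemma span_stable_op_diff:
  "span_stable_op c G p \<Longrightarrow> span_stable_op c G q \<Longrightarrow> span_stable_op c G (p - q)"
  using span_stable_op_add[of c G p "- q"] span_stable_op_uminus[of c G q] by simp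

lemma span_stable_op_0: "span_stable_op c G 0"
proof -
  have "span_stable c G (sd_scale 0 (mono_el Cen))"
    by (intro span_stable_scale span_stable_Cen)
  then show ?thesis by (simp add: span_stable_op_def)
qed

lemma span_stable_op_sum:
  "finite A \<Longrightarrow> (\<And>k. k \<in> A \<Longrightarrow> span_stable_op c G (f k)) \<Longrightarrow> span_stable_op c G (sum f A)"
proof (induction A rule: finite_induct)
  case empty
  then show ?case by (simp add: span_stable_op_0)
next
  case (insert k A)
  then show ?case by (simp add: span_stable_op_add)
qed

lemma generates_vac_if_all_terms_stable:
  assumes "\<And>r a f. stable_term c G r a f" shows "generates_vac c G"
proof (rule generates_vac_if_all_stable)
  fix x :: sdel
  obtain p z where x: "x = (p, z)" by (cases x)
  have "p = (\<Sum>k\<in>Poly_Mapping.keys p. Poly_Mapping.single k (Poly_Mapping.lookup p k))"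
    by (rule poly_mapping_eqI) (simp add: lookup_sum lookup_single when_def in_keys_iff)
  also have "span_stable_op c G \<dots>"
    using assms by (intro span_stable_op_sum) (auto simp: case_prod_beta)
  finally show "span_stable c G x" by (simp add: x span_stable_iff_op)
qed

lemma stable_term_add:
  "stable_term c G r a f \<Longrightarrow> stable_term c G r a g \<Longrightarrow> stable_term c G r a (f + g)"
  by (simp add: single_add span_stable_op_add)

lemma stable_term_smult: "stable_term c G r a f \<Longrightarrow> stable_term c G r a (smult k f)"
  using span_stable_op_smult[of c G "Poly_Mapping.single (r, a) f" k] by simp

lemma stable_term_uminus: "stable_term c G r a f \<Longrightarrow> stable_term c G r a (- f)"
  by (simp add: single_uminus span_stable_op_uminus)

lemma stable_term_generator:
  assumes "(a, k) \<in> G" shows "stable_term c G n a (- ffD k)"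
proof -
  have "span_stable c G (mono_el (Jmode a k n))"
    unfolding span_stable_def
  proof
    fix u assume "u \<in> iter_prods G"
    from iter_prods.ip_step[OF assms this, of "n + int k"]
    show "wd (mono_el (Jmode a k n) # u) \<in> gen_span c G"
      by (simp add: iter_prod_in_gen_span)
  qed
  then show ?thesis by (simp add: Jmode_def span_stable_iff_op)
qed

lemma span_stable_op_bracket:
  assumes "stable_term c G r a f" "stable_term c G s b g"
  shows "span_stable_op c G (fst (sd_bracket (Mono r a f) (Mono s b g)))"
proof -
  have "span_stable c G (sd_bracket (Mono r a f) (Mono s b g))"
    using assms by (intro span_stable_bracket) (simp_all add: span_stable_iff_op)
  then show ?thesis
    by (metis prod.collapse span_stable_iff_op)
qed

lemma span_stable_op_bracket_add:
  assumes "stable_term c G r a f"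
    and "span_stable_op c G (Poly_Mapping.single (s1, b1) g1 + Poly_Mapping.single (s2, b2) g2)"
    and "sgn_par (Mono r a f) (Mono s1 b1 g1) = sgn_par (Mono r a f) (Mono s2 b2 g2)"
  shows "span_stable_op c G (fst (sd_bracket (Mono r a f) (Mono s1 b1 g1))
                             + fst (sd_bracket (Mono r a f) (Mono s2 b2 g2)))"
proof -
  have "span_stable c G (sd_add (sd_bracket (Mono r a f) (Mono s1 b1 g1))
                                (sd_bracket (Mono r a f) (Mono s2 b2 g2)))"
    using assms by (intro span_stable_bracket_add) (simp_all add: sd_add_def span_stable_iff_op)
  then show ?thesis
    by (simp add: sd_add_def span_stable_iff_op)
qed

section \<open>Falling factorials and the forward difference\<close>

lemma ffD_0: "ffD 0 = 1"
  by (simp add: ffD_def)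

lemma ffD_Suc: "ffD (Suc k) = ffD k * [:- of_nat k, 1:]"
  by (simp add: ffD_def)

lemma degree_ffD: "degree (ffD k) = k" and lead_coeff_ffD: "lead_coeff (ffD k) = 1"
proof (induction k)
  case 0
  show "degree (ffD 0) = 0" "lead_coeff (ffD 0) = 1" by (simp_all add: ffD_0)
next
  case (Suc k)
  have "ffD k \<noteq> 0" using Suc.IH(2) by auto
  then have "degree (ffD (Suc k)) = degree (ffD k) + degree [:- of_nat k, 1 :: complex:]"
    unfolding ffD_Suc by (intro degree_mult_eq) auto
  then show "degree (ffD (Suc k)) = Suc k"
    using Suc.IH(1) by simp
  have "lead_coeff (ffD (Suc k)) = lead_coeff (ffD k) * lead_coeff [:- of_nat k, 1 :: complex:]"
    by (simp only: ffD_Suc lead_coeff_mult)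
  then show "lead_coeff (ffD (Suc k)) = 1"
    using Suc.IH by simp
qed

definition fwd_diff :: "complex poly \<Rightarrow> complex poly" where
  "fwd_diff q = shiftD q 1 - q"

lemma fwd_diff_add: "fwd_diff (p + q) = fwd_diff p + fwd_diff q"
  by (simp add: fwd_diff_def shiftD_def pcompose_add)

lemma fwd_diff_smult: "fwd_diff (smult a p) = smult a (fwd_diff p)"
  by (simp add: fwd_diff_def shiftD_def pcompose_smult smult_diff_right)

lemma shiftD_ffD_Suc: "shiftD (ffD (Suc k)) 1 = [:1, 1:] * ffD k"
proof -
  have "shiftD (ffD (Suc k)) 1 = (\<Prod>i<Suc k. pcompose [:- of_nat i, 1:] [:1, 1:])"
    unfolding shiftD_def ffD_def of_int_1 by (rule pcompose_prod)
  also have "\<dots> = (\<Prod>i<Suc k. [:1 - of_nat i, 1:])"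
    by (rule prod.cong) (simp_all add: pcompose_pCons)
  also have "\<dots> = [:1 - of_nat 0, 1:] * (\<Prod>i<k. [:1 - of_nat (Suc i), 1:])"
    by (rule prod.lessThan_Suc_shift)
  also have "\<dots> = [:1, 1:] * ffD k"
    by (simp add: ffD_def)
  finally show ?thesis .
qed

lemma fwd_diff_ffD: "fwd_diff (ffD (Suc k)) = smult (of_nat (Suc k)) (ffD k)"
proof -
  have "fwd_diff (ffD (Suc k)) = [:1, 1:] * ffD k - ffD k * [:- of_nat k, 1:]"
    unfolding fwd_diff_def by (subst shiftD_ffD_Suc) (simp only: ffD_Suc)
  also have "\<dots> = smult (of_nat (Suc k)) (ffD k)"
  proof -
    have "[:1, 1:] * ffD k = ffD k + pCons 0 (ffD k)" by simp
    moreover have "ffD k * [:- of_nat k, 1:] = smult (- of_nat k) (ffD k) + pCons 0 (ffD k)" by simp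
    ultimately show ?thesis by (simp add: algebra_simps smult_add_left)
  qed
  finally show ?thesis .
qed

lemma fwd_diff_surj: "\<exists>q. fwd_diff q = h"
proof -
  have "\<exists>q. fwd_diff q = h" if "degree h \<le> d" for d h
    using that
  proof (induction d arbitrary: h)
    case 0
    then obtain a where "h = [:a:]" by (metis degree0_coeffs le_zero_eq)
    then have "fwd_diff (smult a (ffD (Suc 0))) = h"
      using fwd_diff_ffD[of 0] by (simp add: fwd_diff_smult ffD_0)
    then show ?case by blast
  next
    case (Suc d)
    let ?a = "coeff h (Suc d)"
    have "degree (h - smult ?a (ffD (Suc d))) \<le> d"
    proof (rule degree_le, intro allI impI)
      fix i assume "d < i"
      then show "coeff (h - smult ?a (ffD (Suc d))) i = 0"
        using Suc.prems degree_ffD[of "Suc d"] lead_coeff_ffD[of "Suc d"]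
        by (cases "i = Suc d") (simp_all add: coeff_eq_0)
    qed
    then obtain q where q: "fwd_diff q = h - smult ?a (ffD (Suc d))"
      using Suc.IH by blast
    have "(of_nat (Suc (Suc d)) :: complex) \<noteq> 0" by (simp only: of_nat_eq_0_iff)
    then have "fwd_diff (q + smult (?a / of_nat (Suc (Suc d))) (ffD (Suc (Suc d)))) = h"
      by (simp only: fwd_diff_add fwd_diff_smult fwd_diff_ffD q) simp
    then show ?case by blast
  qed
  then show ?thesis by blast
qed

lemma stable_generator_modes:
  shows "(a, 0) \<in> G \<Longrightarrow> stable_term c G n a 1"
    and "(a, 1) \<in> G \<Longrightarrow> stable_term c G n a [:0, 1:]"
  using stable_term_uminus[OF stable_term_generator, of a 0 G c n]
    stable_term_uminus[OF stable_term_generator, of a 1 G c n]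
  by (simp_all add: ffD_def)

section \<open>Generation by the modes of S and T\<close>

lemmas bracket_simps = term_el_def lbl_mult_def lbl_of_def shiftD_def lbl_odd_def

lemma stable_odd_terms:
  assumes one: "\<And>n a. stable_term c G n a 1" and D: "\<And>n. stable_term c G n L0 [:0, 1:]"
  shows "stable_term c G n Lp f" and "stable_term c G n Lm f"
proof -
  have pCons_eq: "pCons a p = smult a 1 + [:0, 1:] * p" for a :: complex and p
    by simp
  show "stable_term c G n Lp f"
  proof (induction f arbitrary: n)
    case 0
    show ?case by (simp add: span_stable_op_0)
  next
    case (pCons a p n)
    have "span_stable_op c G (fst (sd_bracket (Mono n L0 [:0, 1:]) (Mono 0 Lp p)))"
      by (rule span_stable_op_bracket[OF D pCons.IH])
    then have "stable_term c G n Lp ([:0, 1:] * p)"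
      by (simp add: bracket_simps)
    then show ?case
      by (subst pCons_eq) (intro stable_term_add stable_term_smult one)
  qed
  show "stable_term c G n Lm f"
  proof (induction f arbitrary: n)
    case 0
    show ?case by (simp add: span_stable_op_0)
  next
    case (pCons a p n)
    have "span_stable_op c G (fst (sd_bracket (Mono 0 L0 [:0, 1:]) (Mono n Lm p)))"
      by (rule span_stable_op_bracket[OF D pCons.IH])
    then have "span_stable_op c G (- Poly_Mapping.single (n, Lm) ([:0, 1:] * p))"
      by (simp add: bracket_simps)
    then have "stable_term c G n Lm ([:0, 1:] * p)"
      using span_stable_op_uminus by fastforce
    then show ?case
      by (subst pCons_eq) (intro stable_term_add stable_term_smult one)
  qed
qed

lemma stable_diagonal_terms:
  assumes Lp: "\<And>n f. stable_term c G n Lp f" and Lm: "\<And>n f. stable_term c G n Lm f"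
  shows "stable_term c G n L1 h" and "stable_term c G n L0 h"
proof -
  have same: "span_stable_op c G (Poly_Mapping.single (n, L0) q + Poly_Mapping.single (n, L1) q)"
    for n q
    using span_stable_op_bracket[OF Lp Lm, of n q 0 1]
    by (simp add: bracket_simps pcompose_1 single_uminus)
  have shifted: "span_stable_op c G (Poly_Mapping.single (n, L0) q
                                     + Poly_Mapping.single (n, L1) (shiftD q 1))" for q
    using span_stable_op_bracket[OF Lp Lm, of 1 1 "n - 1" q]
    by (simp add: bracket_simps pcompose_1 single_uminus)
  obtain q where q: "fwd_diff q = h" using fwd_diff_surj by blast
  show L1: "stable_term c G n L1 h"
    using span_stable_op_diff[OF shifted[of q] same[of n q]] q
    by (simp add: fwd_diff_def flip: single_diff)
  show "stable_term c G n L0 h"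
    using span_stable_op_diff[OF same[of n h] L1] by simp
qed

lemma stable_terms_if_D_M0:
  assumes "\<And>n a. stable_term c G n a 1" and "\<And>n. stable_term c G n L0 [:0, 1:]"
  shows "stable_term c G n a f"
  using stable_odd_terms[OF assms] stable_diagonal_terms[OF stable_odd_terms[OF assms]]
  by (cases a) auto

text \<open>Bracketing with t M_0 kills the M_1 part of [t^m D M_+, D M_-] = t^m (D^2 M_0 + (D+m) D M_1)
  and turns t^(n-1) D^2 M_0 into t^n (-2D - 1) M_0.\<close>

lemma stable_D_M0_if_D_odd:
  assumes one: "\<And>n a. stable_term c G n a 1"
    and Dp: "\<And>n. stable_term c G n Lp [:0, 1:]" and Dm: "\<And>n. stable_term c G n Lm [:0, 1:]"
  shows "stable_term c G n L0 [:0, 1:]"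
proof -
  have DD: "span_stable_op c G (Poly_Mapping.single (m, L0) ([:0, 1:] * [:0, 1:])
                               + Poly_Mapping.single (m, L1) ([:of_int m, 1:] * [:0, 1:]))" for m
  proof -
    have "fst (sd_bracket (Mono m Lp [:0, 1:]) (Mono 0 Lm [:0, 1:]))
        = Poly_Mapping.single (m, L0) ([:0, 1:] * [:0, 1:])
          + Poly_Mapping.single (m, L1) ([:of_int m, 1:] * [:0, 1:])"
      by (rule poly_mapping_eqI)
         (simp add: bracket_simps pcompose_pCons lookup_add lookup_minus lookup_single when_def)
    then show ?thesis using span_stable_op_bracket[OF Dp Dm] by metis
  qed
  have "fst (sd_bracket (Mono 1 L0 1) (Mono (n - 1) L0 ([:0, 1:] * [:0, 1:])))
      + fst (sd_bracket (Mono 1 L0 1) (Mono (n - 1) L1 ([:of_int (n - 1), 1:] * [:0, 1:])))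
      = Poly_Mapping.single (n, L0) [:-1, -2:]"
    by (rule poly_mapping_eqI)
       (simp add: bracket_simps pcompose_pCons pcompose_1 lookup_add lookup_minus lookup_single when_def)
  moreover have "span_stable_op c G
      (fst (sd_bracket (Mono 1 L0 1) (Mono (n - 1) L0 ([:0, 1:] * [:0, 1:])))
       + fst (sd_bracket (Mono 1 L0 1) (Mono (n - 1) L1 ([:of_int (n - 1), 1:] * [:0, 1:]))))"
    by (rule span_stable_op_bracket_add[OF one DD]) (simp add: sgn_par_def lbl_odd_def)
  ultimately have "stable_term c G n L0 (smult (-1/2) ([:-1, -2:] + 1))"
    by (intro stable_term_smult stable_term_add one) simp
  moreover have "smult (-1/2) ([:-1, -2:] + 1) = ([:0, 1:] :: complex poly)"
    by (simp add: one_pCons)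
  ultimately show ?thesis by simp
qed

theorem mainTheorem3:
  fixes c :: complex
  shows "generates_vac c {(L0, 0), (L1, 0), (Lp, 0), (Lm, 0), (L0, 1)}
       \<and> generates_vac c {(L0, 0), (L1, 0), (Lp, 0), (Lm, 0), (Lp, 1), (Lm, 1)}"
proof
  let ?S = "{(L0, 0), (L1, 0), (Lp, 0), (Lm, 0), (L0, 1)} :: (lbl \<times> nat) set"
  have one: "stable_term c ?S n a 1" for n a
    by (rule stable_generator_modes) (cases a; simp)
  have D: "stable_term c ?S n L0 [:0, 1:]" for n
    by (rule stable_generator_modes) simp
  have "stable_term c ?S n a f" for n a f
    using one D by (rule stable_terms_if_D_M0)
  then show "generates_vac c ?S" by (rule generates_vac_if_all_terms_stable)
next
  let ?T = "{(L0, 0), (L1, 0), (Lp, 0), (Lm, 0), (Lp, 1), (Lm, 1)} :: (lbl \<times> nat) set"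
  have one: "stable_term c ?T n a 1" for n a
    by (rule stable_generator_modes) (cases a; simp)
  have D: "stable_term c ?T n L0 [:0, 1:]" for n
    by (rule stable_D_M0_if_D_odd[OF one]) (simp_all add: stable_generator_modes)
  have "stable_term c ?T n a f" for n a f
    using one D by (rule stable_terms_if_D_M0)
  then show "generates_vac c ?T" by (rule generates_vac_if_all_terms_stable)
qed

end
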